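(* Let $N\ge3$, let $\Sigma\subseteq\mathbb{R}^N$ be a convex cone with vertex at the origin, and let $\Omega$, $\Gamma_1\subset\partial\Sigma$ and $\nu$ be as in the Setting in the context. If $\Gamma_1$ contains a transversally nondegenerate point, then $\mathrm{span}_{x\in \Gamma_1} \nu(x) =\mathbb{R}^N$.
   Context: Setting. $\Omega\subset\mathbb{R}^N$ is a smooth bounded domain such that $\Sigma\cap\Omega$ is a bounded domain whose relative boundary $\Gamma_0:=\Sigma\cap\partial\Omega$ is smooth, $\partial\Gamma_0$ is an $(N-2)$-dimensional manifold, and $\partial(\Sigma\cap\Omega)\setminus\Gamma_0$ is smooth outside a singular set $\mathcal{S}\subset\partial\Sigma$ with $\limsup_{r\to 0^+} r^{\ell-N}|\{x:\mathrm{dist}(x,\mathcal{S})\le r\}|<\infty$ for some $0\le\ell\le N-2$. $\Gamma_1:=\partial(\Sigma\cap\Omega)\setminus(\overline{\Gamma}_0\cup\overline{\mathcal{S}})$ (a relatively open subset of $\partial\Sigma$ around each point of which $\partial\Sigma$ is of class $C^2$), and $\nu$ is the exterior unit normal on $\Gamma_1$. A point $x\in\partial\Sigma$ around which $\partial\Sigma$ is of class $C^2$ is called transversally nondegenerate if the second fundamental form of $\partial\Sigma$ at $x$, restricted to the tangent directions to $\partial\Sigma$ at $x$ which are orthogonal to $x$, has all eigenvalues different from zero. *)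

theory Defs
  imports "HOL-Analysis.Analysis"
begin

definition convex_cone_vertex0 :: "(real^'n) set \<Rightarrow> bool" where
  "convex_cone_vertex0 A \<longleftrightarrow> convex A \<and> (\<forall>x\<in>A. \<forall>t::real. t > 0 \<longrightarrow> t *\<^sub>R x \<in> A)"

definition bounded_domain :: "(real^'n) set \<Rightarrow> bool" where
  "bounded_domain D \<longleftrightarrow> D \<noteq> {} \<and> open D \<and> connected D \<and> bounded D"

text \<open>A local C^2 defining function for the boundary of A near x:
  g is C^2 on the open neighbourhood U of x (gradient G, Hessian H, H continuous),
  the gradient does not vanish, A lies locally on the side g < 0 and the boundary
  of A is the zero set of g.\<close>
definition C2_chart ::
  "(real^'n) set \<Rightarrow> real^'n \<Rightarrow> (real^'n) set \<Rightarrow> (real^'n \<Rightarrow> real)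
    \<Rightarrow> (real^'n \<Rightarrow> real^'n) \<Rightarrow> (real^'n \<Rightarrow> real^'n \<Rightarrow> real^'n) \<Rightarrow> bool" where
  "C2_chart A x U g G H \<longleftrightarrow> open U \<and> x \<in> U \<and>
     (\<forall>y\<in>U. (g has_derivative (\<lambda>h. G y \<bullet> h)) (at y) \<and> (G has_derivative H y) (at y)
             \<and> G y \<noteq> 0) \<and>
     (\<forall>v. continuous_on U (\<lambda>y. H y v)) \<and>
     U \<inter> interior A = {y\<in>U. g y < 0} \<and> U \<inter> frontier A = {y\<in>U. g y = 0}"

definition boundary_C2_at :: "(real^'n) set \<Rightarrow> real^'n \<Rightarrow> bool" where
  "boundary_C2_at A x \<longleftrightarrow> (\<exists>U g G H. C2_chart A x U g G H)"

definition exterior_unit_normal :: "(real^'n) set \<Rightarrow> real^'n \<Rightarrow> real^'n \<Rightarrow> bool" where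
  "exterior_unit_normal A x n \<longleftrightarrow>
     (\<exists>U g G H. C2_chart A x U g G H \<and> n = (1 / norm (G x)) *\<^sub>R G x)"

text \<open>Second fundamental form at x (w.r.t. the exterior normal), computed from a
  defining function: II(v,w) = D^2 g(x)[v,w] / |grad g(x)| for tangent v, w.\<close>
definition second_fundamental_form ::
  "(real^'n \<Rightarrow> real^'n) \<Rightarrow> (real^'n \<Rightarrow> real^'n \<Rightarrow> real^'n) \<Rightarrow> real^'n
     \<Rightarrow> real^'n \<Rightarrow> real^'n \<Rightarrow> real" where
  "second_fundamental_form G H x v w = (H x v \<bullet> w) / norm (G x)"

definition restricted_eigenvalue ::
  "(real^'n \<Rightarrow> real^'n \<Rightarrow> real) \<Rightarrow> (real^'n) set \<Rightarrow> real \<Rightarrow> bool" where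
  "restricted_eigenvalue B T lam \<longleftrightarrow>
     (\<exists>v\<in>T. v \<noteq> 0 \<and> (\<forall>w\<in>T. B v w = lam * (v \<bullet> w)))"

definition transversally_nondegenerate :: "(real^'n) set \<Rightarrow> real^'n \<Rightarrow> bool" where
  "transversally_nondegenerate A x \<longleftrightarrow>
     (\<exists>U g G H. C2_chart A x U g G H \<and>
        (\<forall>lam. restricted_eigenvalue (second_fundamental_form G H x)
                  {v. G x \<bullet> v = 0 \<and> x \<bullet> v = 0} lam \<longrightarrow> lam \<noteq> 0))"

end

theory Submission
  imports Defs
begin

text \<open>Suppose the normals on \<open>\<Gamma>\<^sub>1\<close> do not span, so some \<open>e \<noteq> 0\<close> is orthogonal to all of
  them. Near a transversally nondegenerate point \<open>x\<close>, let \<open>g\<close> be a \<open>C\<^sup>2\<close> defining function of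
  \<open>\<partial>\<Sigma>\<close> with gradient \<open>G\<close> and Hessian \<open>H\<close>. On the level set \<open>g = 0\<close> we have \<open>G z \<bullet> e = 0\<close>
  and, as \<open>\<Sigma>\<close> is a cone, \<open>G z \<bullet> z = 0\<close>; differentiating along the level set gives
  \<open>H z v \<bullet> e = 0\<close> and \<open>H z v \<bullet> z = 0\<close> for tangent \<open>v\<close>. Let \<open>T = {G x, x}\<^sup>\<bottom>\<close>. If \<open>e\<close> is not
  parallel to \<open>x\<close>, its component orthogonal to \<open>x\<close> is a nonzero vector of \<open>T\<close> orthogonal to
  \<open>H x T\<close>. If \<open>e\<close> is parallel to \<open>x\<close>, then \<open>H z v \<bullet> (z - x) = 0\<close> on the level set, and
  letting \<open>z \<rightarrow> x\<close> in any direction of \<open>T\<close> (which needs \<open>N \<ge> 3\<close> to be nonzero) shows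
  \<open>H x T \<bottom> T\<close>. Either way the second fundamental form on \<open>T\<close> is degenerate, i.e. has the
  eigenvalue \<open>0\<close>.\<close>

text \<open>On the segment \<open>\<bar>\<tau>\<bar> \<le> \<eta> s\<close> of the normal line through \<open>x + s v\<close>, \<open>g\<close> equals
  \<open>\<tau> \<bar>n\<bar>\<^sup>2\<close> up to an error \<open>o(s)\<close>, so it changes sign there.\<close>
lemma zero_near_tangent_point:
  fixes g :: "'a::real_inner \<Rightarrow> real"
  assumes U: "open U" "x \<in> U" and cont: "continuous_on U g"
    and dg: "(g has_derivative (\<lambda>h. n \<bullet> h)) (at x)"
    and gx: "g x = 0" and n: "n \<noteq> 0" and v: "n \<bullet> v = 0" and eta: "\<eta> > 0"
  obtains s0 where "s0 > 0" and "\<And>s. 0 < s \<Longrightarrow> s < s0 \<Longrightarrow>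
    \<exists>\<tau>. \<bar>\<tau>\<bar> \<le> \<eta> * s \<and> x + s *\<^sub>R v + \<tau> *\<^sub>R n \<in> U \<and> g (x + s *\<^sub>R v + \<tau> *\<^sub>R n) = 0"
proof -
  define m where "m = n \<bullet> n"
  have m: "m > 0" using n by (simp add: m_def)
  obtain \<rho> where \<rho>: "\<rho> > 0" "ball x \<rho> \<subseteq> U" using U openE by blast
  define c where "c = norm v + \<eta> * norm n"
  have c: "c > 0" using n eta by (simp add: c_def add_nonneg_pos)
  define \<epsilon> where "\<epsilon> = \<eta> * m / (2 * c)"
  have \<epsilon>: "\<epsilon> > 0" using eta m c by (simp add: \<epsilon>_def)
  obtain \<delta> where \<delta>: "\<delta> > 0" and
    taylor: "\<And>y. norm (y - x) < \<delta> \<Longrightarrow> norm (g y - g x - n \<bullet> (y - x)) \<le> \<epsilon> * norm (y - x)"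
    using dg \<epsilon> unfolding has_derivative_at_alt by blast
  define s0 where "s0 = min \<delta> \<rho> / c"
  have "\<exists>\<tau>. \<bar>\<tau>\<bar> \<le> \<eta> * s \<and> x + s *\<^sub>R v + \<tau> *\<^sub>R n \<in> U \<and> g (x + s *\<^sub>R v + \<tau> *\<^sub>R n) = 0"
    if s: "0 < s" "s < s0" for s
  proof -
    define p where "p \<tau> = x + s *\<^sub>R v + \<tau> *\<^sub>R n" for \<tau>
    have p_near: "norm (p \<tau> - x) \<le> s * c" if "\<bar>\<tau>\<bar> \<le> \<eta> * s" for \<tau>
    proof -
      have "norm (p \<tau> - x) \<le> s * norm v + \<bar>\<tau>\<bar> * norm n"
        using s by (simp add: p_def) (metis abs_of_pos norm_scaleR norm_triangle_ineq)
      also have "\<dots> \<le> s * c"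
        using mult_right_mono[OF that norm_ge_zero[of n]] by (simp add: c_def algebra_simps)
      finally show ?thesis .
    qed
    have "s * c < min \<delta> \<rho>" using s c by (simp add: s0_def pos_less_divide_eq mult.commute)
    then have p_close: "norm (p \<tau> - x) < min \<delta> \<rho>" if "\<bar>\<tau>\<bar> \<le> \<eta> * s" for \<tau>
      using p_near[OF that] by linarith
    have pU: "p \<tau> \<in> U" if "\<bar>\<tau>\<bar> \<le> \<eta> * s" for \<tau>
      using p_close[OF that] \<rho> by (auto simp: dist_norm norm_minus_commute)
    have g_approx: "\<bar>g (p \<tau>) - \<tau> * m\<bar> \<le> \<eta> * s * m / 2" if "\<bar>\<tau>\<bar> \<le> \<eta> * s" for \<tau>
    proof -
      have "n \<bullet> (p \<tau> - x) = \<tau> * m" using v by (simp add: p_def m_def inner_add_right)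
      then have "\<bar>g (p \<tau>) - \<tau> * m\<bar> \<le> \<epsilon> * norm (p \<tau> - x)"
        using taylor[of "p \<tau>"] p_close[OF that] gx by simp
      also have "\<dots> \<le> \<epsilon> * (s * c)" using p_near[OF that] \<epsilon> by simp
      also have "\<dots> = \<eta> * s * m / 2" using c by (simp add: \<epsilon>_def)
      finally show ?thesis .
    qed
    have cont_p: "continuous_on {-(\<eta> * s)..\<eta> * s} (\<lambda>\<tau>. g (p \<tau>))"
    proof (rule continuous_on_compose2[OF cont])
      show "continuous_on {-(\<eta> * s)..\<eta> * s} p" unfolding p_def by (intro continuous_intros)
      show "p ` {-(\<eta> * s)..\<eta> * s} \<subseteq> U" using pU by auto
    qed
    have ends: "\<bar>-(\<eta> * s)\<bar> \<le> \<eta> * s" "\<bar>\<eta> * s\<bar> \<le> \<eta> * s" using eta s by simp_all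
    have "\<eta> * s * m > 0" using eta s m by simp
    then have "g (p (-(\<eta> * s))) \<le> 0" "0 \<le> g (p (\<eta> * s))"
      using g_approx[OF ends(1)] g_approx[OF ends(2)] unfolding abs_le_iff by auto
    moreover have "-(\<eta> * s) \<le> \<eta> * s" using eta s by simp
    ultimately obtain \<tau> where "-(\<eta> * s) \<le> \<tau>" "\<tau> \<le> \<eta> * s" "g (p \<tau>) = 0"
      using IVT'[of "\<lambda>\<tau>. g (p \<tau>)", OF _ _ _ cont_p] by blast
    then have "\<bar>\<tau>\<bar> \<le> \<eta> * s" by (simp add: abs_le_iff)
    with \<open>g (p \<tau>) = 0\<close> pU show ?thesis by (auto simp: p_def)
  qed
  moreover have "s0 > 0" using \<delta> \<rho> c by (simp add: s0_def)
  ultimately show ?thesis using that by blast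
qed

lemma tangent_zero_sequence:
  fixes g :: "'a::real_inner \<Rightarrow> real"
  assumes U: "open U" "x \<in> U" and cont: "continuous_on U g"
    and dg: "(g has_derivative (\<lambda>h. n \<bullet> h)) (at x)"
    and gx: "g x = 0" and n: "n \<noteq> 0" and v: "n \<bullet> v = 0"
  obtains s r where "\<And>k. s k > 0" "\<And>k. x + s k *\<^sub>R (v + r k *\<^sub>R n) \<in> U"
    "\<And>k. g (x + s k *\<^sub>R (v + r k *\<^sub>R n)) = 0" "s \<longlonglongrightarrow> 0" "r \<longlonglongrightarrow> 0"
proof -
  have "\<exists>s0>0. \<forall>s. 0 < s \<and> s < s0 \<longrightarrow> (\<exists>\<tau>. \<bar>\<tau>\<bar> \<le> inverse (Suc k) * s \<and>
          x + s *\<^sub>R v + \<tau> *\<^sub>R n \<in> U \<and> g (x + s *\<^sub>R v + \<tau> *\<^sub>R n) = 0)" for k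
  proof -
    have pos: "inverse (Suc k) > (0::real)" by simp
    obtain s0 where "s0 > 0" and "\<And>s. 0 < s \<Longrightarrow> s < s0 \<Longrightarrow> \<exists>\<tau>. \<bar>\<tau>\<bar> \<le> inverse (Suc k) * s \<and>
          x + s *\<^sub>R v + \<tau> *\<^sub>R n \<in> U \<and> g (x + s *\<^sub>R v + \<tau> *\<^sub>R n) = 0"
      using zero_near_tangent_point[OF U cont dg gx n v pos] by blast
    then show ?thesis by blast
  qed
  then obtain s0 where s0: "\<And>k. s0 k > 0" and
    s0_zero: "\<And>k s. 0 < s \<and> s < s0 k \<Longrightarrow> \<exists>\<tau>. \<bar>\<tau>\<bar> \<le> inverse (Suc k) * s \<and>
          x + s *\<^sub>R v + \<tau> *\<^sub>R n \<in> U \<and> g (x + s *\<^sub>R v + \<tau> *\<^sub>R n) = 0"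
    by metis
  define s where "s k = min (s0 k / 2) (inverse (Suc k))" for k
  have s: "0 < s k" "s k < s0 k" for k using s0[of k] by (simp_all add: s_def)
  then have "\<forall>k. \<exists>\<tau>. \<bar>\<tau>\<bar> \<le> inverse (Suc k) * s k \<and>
          x + s k *\<^sub>R v + \<tau> *\<^sub>R n \<in> U \<and> g (x + s k *\<^sub>R v + \<tau> *\<^sub>R n) = 0"
    using s0_zero by blast
  then obtain \<tau> where \<tau>: "\<And>k. \<bar>\<tau> k\<bar> \<le> inverse (Suc k) * s k \<and>
          x + s k *\<^sub>R v + \<tau> k *\<^sub>R n \<in> U \<and> g (x + s k *\<^sub>R v + \<tau> k *\<^sub>R n) = 0"
    by metis
  define r where "r k = \<tau> k / s k" for k
  have point: "x + s k *\<^sub>R (v + r k *\<^sub>R n) = x + s k *\<^sub>R v + \<tau> k *\<^sub>R n" for k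
    using s(1)[of k] by (simp add: r_def scaleR_add_right)
  have "s \<longlonglongrightarrow> 0"
    by (rule tendsto_sandwich[OF _ _ tendsto_const LIMSEQ_inverse_real_of_nat])
      (use s in \<open>auto simp: s_def less_imp_le\<close>)
  moreover have "r \<longlonglongrightarrow> 0"
  proof (rule tendsto_norm_zero_cancel, rule tendsto_sandwich[OF _ _ tendsto_const LIMSEQ_inverse_real_of_nat])
    show "\<forall>\<^sub>F k in sequentially. norm (r k) \<le> inverse (Suc k)"
    proof (intro always_eventually allI)
      fix k
      have "\<bar>\<tau> k\<bar> \<le> inverse (Suc k) * s k" using \<tau> by blast
      then show "norm (r k) \<le> inverse (Suc k)"
        using s(1)[of k] by (simp add: r_def abs_div pos_divide_le_eq)
    qed
  qed simp
  moreover have "x + s k *\<^sub>R (v + r k *\<^sub>R n) \<in> U" "g (x + s k *\<^sub>R (v + r k *\<^sub>R n)) = 0" for k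
    unfolding point using \<tau> by blast+
  ultimately show ?thesis using that s(1) by blast
qed

lemma derivative_zero_along_tangent:
  fixes g \<phi> :: "'a::real_inner \<Rightarrow> real"
  assumes U: "open U" "x \<in> U" and cont: "continuous_on U g"
    and dg: "(g has_derivative (\<lambda>h. n \<bullet> h)) (at x)"
    and gx: "g x = 0" and n: "n \<noteq> 0" and v: "n \<bullet> v = 0"
    and d\<phi>: "(\<phi> has_derivative D) (at x)" and vanish: "\<And>y. y \<in> U \<Longrightarrow> g y = 0 \<Longrightarrow> \<phi> y = 0"
  shows "D v = 0"
proof (cases "v = 0")
  case True
  then show ?thesis using has_derivative_bounded_linear[OF d\<phi>] by (simp add: linear_simps)
next
  case False
  obtain s r where s: "\<And>k. s k > 0" and yU: "\<And>k. x + s k *\<^sub>R (v + r k *\<^sub>R n) \<in> U"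
    and gy: "\<And>k. g (x + s k *\<^sub>R (v + r k *\<^sub>R n)) = 0" and s0: "s \<longlonglongrightarrow> 0" and r0: "r \<longlonglongrightarrow> 0"
    using tangent_zero_sequence[OF U cont dg gx n v] by blast
  define w where "w k = v + r k *\<^sub>R n" for k
  have bl: "bounded_linear D" using d\<phi> by (rule has_derivative_bounded_linear)
  have "w k \<bullet> v = v \<bullet> v" for k using v by (simp add: w_def inner_add_left inner_commute[of n v])
  then have w_nz: "w k \<noteq> 0" for k using False by (metis inner_eq_zero_iff inner_zero_left)
  have w_lim: "w \<longlonglongrightarrow> v"
    using tendsto_add[OF tendsto_const[of v] tendsto_scaleR[OF r0 tendsto_const[of n]]]
    by (simp add: w_def[abs_def])
  have "((\<lambda>h. norm (\<phi> (x + h) - \<phi> x - D h) / norm h) \<longlongrightarrow> 0) (at 0)"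
    using d\<phi> by (simp add: has_derivative_at)
  moreover have "filterlim (\<lambda>k. s k *\<^sub>R w k) (at 0) sequentially"
  proof (rule filterlim_atI)
    show "(\<lambda>k. s k *\<^sub>R w k) \<longlonglongrightarrow> 0"
      using tendsto_scaleR[OF s0 w_lim] by simp
  qed (use s w_nz in \<open>simp add: less_imp_neq[symmetric]\<close>)
  ultimately have "(\<lambda>k. norm (\<phi> (x + s k *\<^sub>R w k) - \<phi> x - D (s k *\<^sub>R w k)) / norm (s k *\<^sub>R w k))
      \<longlonglongrightarrow> 0"
    by (rule filterlim_compose)
  moreover have "norm (\<phi> (x + s k *\<^sub>R w k) - \<phi> x - D (s k *\<^sub>R w k)) / norm (s k *\<^sub>R w k)
      = \<bar>D (w k)\<bar> / norm (w k)" for k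
    using vanish[OF yU gy] vanish[OF U(2) gx] s[of k] w_nz[of k]
    by (simp add: w_def linear_scale[OF bounded_linear.linear[OF bl]] abs_mult)
  ultimately have "(\<lambda>k. \<bar>D (w k)\<bar> / norm (w k)) \<longlonglongrightarrow> 0" by simp
  moreover have "(\<lambda>k. \<bar>D (w k)\<bar> / norm (w k)) \<longlonglongrightarrow> \<bar>D v\<bar> / norm v"
    using False by (intro tendsto_intros bounded_linear.tendsto[OF bl] w_lim) simp
  ultimately have "\<bar>D v\<bar> / norm v = 0" using LIMSEQ_unique by blast
  then show ?thesis using False by simp
qed

lemma scaleR_mem_frontier_cone:
  fixes S :: "'a::real_normed_vector set"
  assumes cone: "\<forall>x\<in>S. \<forall>t>0. t *\<^sub>R x \<in> S" and z: "z \<in> frontier S" and t: "t > 0"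
  shows "t *\<^sub>R z \<in> frontier S"
proof -
  have dist_scaled: "dist (t *\<^sub>R z) (t *\<^sub>R y) = t * dist z y" for y
    using t by (simp add: dist_norm flip: scaleR_diff_right)
  have scaled_mem_iff: "t *\<^sub>R y \<in> S \<longleftrightarrow> y \<in> S" for y
  proof
    assume "t *\<^sub>R y \<in> S"
    then have "inverse t *\<^sub>R (t *\<^sub>R y) \<in> S"
      using cone t positive_imp_inverse_positive by blast
    then show "y \<in> S" using t by simp
  qed (use cone t in blast)
  show ?thesis
    unfolding frontier_straddle
  proof (intro allI impI)
    fix e :: real assume "e > 0"
    with z t obtain p q where "p \<in> S" "dist z p < e / t" "q \<notin> S" "dist z q < e / t"
      unfolding frontier_straddle by (meson divide_pos_pos)
    then show "(\<exists>x\<in>S. dist (t *\<^sub>R z) x < e) \<and> (\<exists>x. x \<notin> S \<and> dist (t *\<^sub>R z) x < e)"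
      using t dist_scaled scaled_mem_iff
      by (metis pos_less_divide_eq mult.commute)
  qed
qed

lemma parallel_if_orthogonal_complement_subset:
  fixes a b :: "'a::real_inner"
  assumes "\<And>v. a \<bullet> v = 0 \<Longrightarrow> b \<bullet> v = 0"
  shows "b = ((b \<bullet> a) / (a \<bullet> a)) *\<^sub>R a"
proof -
  define w where "w = b - ((b \<bullet> a) / (a \<bullet> a)) *\<^sub>R a"
  have "a \<bullet> w = 0"
    by (cases "a = 0") (simp_all add: w_def inner_diff_right inner_commute)
  then have "b \<bullet> w = 0" by (rule assms)
  then have "w \<bullet> w = 0" using \<open>a \<bullet> w = 0\<close> by (simp add: w_def inner_diff_left inner_commute)
  then show ?thesis by (simp add: w_def)
qed

lemma exists_nonzero_orthogonal_pair:
  fixes a b :: "'a::euclidean_space"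
  assumes "3 \<le> DIM('a)"
  obtains v where "v \<noteq> 0" "a \<bullet> v = 0" "b \<bullet> v = 0"
proof -
  have "dim {a, b} \<le> card {a, b}" by (rule dim_le_card') simp
  also have "\<dots> < DIM('a)" using assms by (simp add: card_insert_if)
  finally obtain v where "v \<noteq> 0" "\<And>y. y \<in> span {a, b} \<Longrightarrow> orthogonal v y"
    using orthogonal_to_subspace_exists by blast
  then show ?thesis
    using that span_base[of a "{a, b}"] span_base[of b "{a, b}"]
    by (simp add: orthogonal_def inner_commute)
qed

text \<open>For a bilinear form \<open>M u \<bullet> v\<close> restricted to \<open>T = {a, b}\<^sup>\<bottom>\<close>, a nontrivial right
  radical gives a nontrivial left radical: the compression \<open>P \<circ> M \<circ> P\<close> to \<open>T\<close>, extended by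
  the identity on \<open>T\<^sup>\<bottom>\<close>, misses \<open>w\<close>, hence is not injective. Since \<open>0 / 0 = 0\<close>, the
  projection \<open>P\<close> below is correct also when \<open>a\<close> or \<open>b\<close> vanishes.\<close>
lemma left_radical_nontrivial:
  fixes M :: "'a::euclidean_space \<Rightarrow> 'a" and a b w :: 'a
  assumes lin: "linear M" and ab: "a \<bullet> b = 0" and T: "T = {v. a \<bullet> v = 0 \<and> b \<bullet> v = 0}"
    and w: "w \<in> T" "w \<noteq> 0" and radical_w: "\<forall>v\<in>T. M v \<bullet> w = 0"
  shows "\<exists>u\<in>T. u \<noteq> 0 \<and> (\<forall>v\<in>T. M u \<bullet> v = 0)"
proof -
  define P where "P v = v - ((v \<bullet> a) / (a \<bullet> a)) *\<^sub>R a - ((v \<bullet> b) / (b \<bullet> b)) *\<^sub>R b" for v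
  have PT: "P v \<in> T" for v
  proof -
    have "a \<bullet> P v = 0"
      by (cases "a = 0") (auto simp: P_def inner_diff_right ab inner_commute)
    moreover have "b \<bullet> P v = 0"
      by (cases "b = 0") (auto simp: P_def inner_diff_right ab inner_commute)
    ultimately show ?thesis by (simp add: T)
  qed
  have P_id: "P v = v" if "v \<in> T" for v
    using that by (simp add: T P_def inner_commute)
  have P_sym: "P u \<bullet> v = u \<bullet> P v" for u v
    by (simp add: P_def inner_commute algebra_simps)
  have linP: "linear P"
    by (rule linearI) (simp_all add: P_def add_divide_distrib algebra_simps)
  define A where "A v = P (M (P v)) + (v - P v)" for v
  have linA: "linear A"
    unfolding A_def[abs_def]
    by (intro linear_compose_add linear_compose_sub linear_compose[unfolded o_def, OF linP]
        linear_compose[unfolded o_def, OF lin] linP linear_id[unfolded id_def])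
  have "A u \<bullet> w = 0" for u
    using radical_w PT[of u] P_id[OF w(1)] P_sym[of _ w] P_sym[of u w]
    by (simp add: A_def inner_add_left inner_diff_left)
  then have "w \<notin> range A" using w(2) by (metis inner_eq_zero_iff imageE)
  then have "\<not> surj A" by auto
  then obtain u where u: "u \<noteq> 0" "A u = 0"
    using linear_injective_imp_surjective[OF linA] linear_injective_0[OF linA] by blast
  have "u - P u = - P (M (P u))" using u(2) by (simp add: A_def add_eq_0_iff)
  then have "(u - P u) \<bullet> (u - P u) = - (P (M (P u)) \<bullet> (u - P u))"
    by (metis inner_minus_left)
  also have "\<dots> = 0"
    using P_sym[of "M (P u)" "u - P u"] P_id[OF PT[of u]] linear_diff[OF linP, of u "P u"] by simp
  finally have uT: "u \<in> T" using PT[of u] by simp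
  have "P (M u) = 0" using u(2) P_id[OF uT] by (simp add: A_def)
  then have "M u \<bullet> v = 0" if "v \<in> T" for v
    using P_sym[of "M u" v] P_id[OF that] by simp
  with uT u(1) show ?thesis by blast
qed

lemma tendsto_linear_family_apply:
  fixes H :: "'a::euclidean_space \<Rightarrow> 'a \<Rightarrow> 'b::real_normed_vector"
  assumes cont: "\<And>v. continuous_on U (\<lambda>y. H y v)" and lin: "\<And>y. y \<in> U \<Longrightarrow> linear (H y)"
    and y: "y \<longlonglongrightarrow> x" "x \<in> U" "\<And>k. y k \<in> U" and w: "w' \<longlonglongrightarrow> w"
  shows "(\<lambda>k. H (y k) (w' k)) \<longlonglongrightarrow> H x w"
proof -
  have expand: "H z u = (\<Sum>i\<in>Basis. (u \<bullet> i) *\<^sub>R H z i)" if "z \<in> U" for z u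
  proof -
    have "H z u = H z (\<Sum>i\<in>Basis. (u \<bullet> i) *\<^sub>R i)" by (simp add: euclidean_representation)
    then show ?thesis using lin[OF that] by (simp add: linear_sum linear_scale)
  qed
  have "(\<lambda>k. H (y k) i) \<longlonglongrightarrow> H x i" for i
    using continuous_on_tendsto_compose[OF cont y(1) y(2)] y(3) by simp
  then have "(\<lambda>k. \<Sum>i\<in>Basis. (w' k \<bullet> i) *\<^sub>R H (y k) i) \<longlonglongrightarrow> (\<Sum>i\<in>Basis. (w \<bullet> i) *\<^sub>R H x i)"
    by (intro tendsto_intros w)
  then show ?thesis using expand y(2,3) by simp
qed

lemma gradient_orthogonal_to_ray:
  fixes g :: "'a::real_inner \<Rightarrow> real"
  assumes dg: "(g has_derivative (\<lambda>h. n \<bullet> h)) (at z)" and U: "open U" "z \<in> U"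
    and ray: "\<And>t. t > 0 \<Longrightarrow> t *\<^sub>R z \<in> U \<Longrightarrow> g (t *\<^sub>R z) = 0"
  shows "n \<bullet> z = 0"
proof -
  have "((\<lambda>t. t *\<^sub>R z) has_derivative (\<lambda>h. h *\<^sub>R z)) (at 1)"
    by (auto intro!: derivative_eq_intros)
  moreover have "(g has_derivative (\<lambda>h. n \<bullet> h)) (at ((\<lambda>t. t *\<^sub>R z) 1))" using dg by simp
  ultimately have "((\<lambda>t. g (t *\<^sub>R z)) has_derivative (\<lambda>h. n \<bullet> (h *\<^sub>R z))) (at 1)"
    by (rule has_derivative_compose)
  moreover have "(\<lambda>h. n \<bullet> (h *\<^sub>R z)) = (*) (n \<bullet> z)" by (auto simp: fun_eq_iff)
  ultimately have "((\<lambda>t. g (t *\<^sub>R z)) has_real_derivative n \<bullet> z) (at 1)"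
    by (simp add: has_field_derivative_def)
  moreover have "\<forall>\<^sub>F t in nhds 1. g (t *\<^sub>R z) = 0"
  proof -
    have "((\<lambda>t. t *\<^sub>R z) \<longlongrightarrow> 1 *\<^sub>R z) (nhds 1)"
      by (rule tendsto_scaleR[OF filterlim_ident tendsto_const])
    then have "\<forall>\<^sub>F t in nhds 1. t *\<^sub>R z \<in> U" using U by (simp add: topological_tendstoD)
    moreover have "\<forall>\<^sub>F t in nhds (1::real). t > 0"
      using eventually_nhds_in_open[of "{0<..}" "1::real"] by simp
    ultimately show ?thesis by eventually_elim (use ray in blast)
  qed
  then have "((\<lambda>t. g (t *\<^sub>R z)) has_real_derivative n \<bullet> z) (at 1) \<longleftrightarrow>
      ((\<lambda>t. 0) has_real_derivative n \<bullet> z) (at 1)"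
    by (rule DERIV_cong_ev[OF refl _ refl])
  ultimately show ?thesis using DERIV_const DERIV_unique by blast
qed

locale C2_defining_function =
  fixes U :: "'a::euclidean_space set" and g :: "'a \<Rightarrow> real"
    and G :: "'a \<Rightarrow> 'a" and H :: "'a \<Rightarrow> 'a \<Rightarrow> 'a"
  assumes open_domain: "open U"
    and has_derivative_g: "\<And>y. y \<in> U \<Longrightarrow> (g has_derivative (\<lambda>h. G y \<bullet> h)) (at y)"
    and has_derivative_G: "\<And>y. y \<in> U \<Longrightarrow> (G has_derivative H y) (at y)"
    and gradient_nonzero: "\<And>y. y \<in> U \<Longrightarrow> G y \<noteq> 0"
    and continuous_H: "\<And>v. continuous_on U (\<lambda>y. H y v)"
begin

lemma continuous_on_g: "continuous_on U g"
  using has_derivative_g by (intro has_derivative_continuous_on) (auto intro: has_derivative_at_withinI)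

lemma linear_H: "y \<in> U \<Longrightarrow> linear (H y)"
  using has_derivative_G by (rule has_derivative_linear)

lemma restrict:
  assumes "open V" "V \<subseteq> U"
  shows "C2_defining_function V g G H"
  using assms has_derivative_g has_derivative_G gradient_nonzero continuous_on_subset[OF continuous_H]
  by unfold_locales auto

lemma tangent_derivative_zero:
  fixes \<phi> :: "'a \<Rightarrow> real"
  assumes "x \<in> U" "g x = 0" "G x \<bullet> v = 0" "(\<phi> has_derivative D) (at x)"
    and "\<And>y. y \<in> U \<Longrightarrow> g y = 0 \<Longrightarrow> \<phi> y = 0"
  shows "D v = 0"
  by (rule derivative_zero_along_tangent[OF open_domain assms(1) continuous_on_g
        has_derivative_g[OF assms(1)] assms(2) gradient_nonzero[OF assms(1)] assms(3-5)])

lemma tangent_hessian_orthogonal: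
  assumes "\<And>y. y \<in> U \<Longrightarrow> g y = 0 \<Longrightarrow> G y \<bullet> e = 0" and "z \<in> U" "g z = 0" "G z \<bullet> v = 0"
  shows "H z v \<bullet> e = 0"
  using tangent_derivative_zero[of z v "\<lambda>y. G y \<bullet> e" "\<lambda>h. H z h \<bullet> e"] assms
    has_derivative_inner_left[OF has_derivative_G] by blast

lemma tangent_hessian_orthogonal_position:
  assumes "\<And>y. y \<in> U \<Longrightarrow> g y = 0 \<Longrightarrow> G y \<bullet> y = 0" and "z \<in> U" "g z = 0" "G z \<bullet> v = 0"
  shows "H z v \<bullet> z = 0"
proof -
  have "((\<lambda>y. G y \<bullet> y) has_derivative (\<lambda>h. G z \<bullet> h + H z h \<bullet> z)) (at z)"
    using has_derivative_inner[OF has_derivative_G[OF \<open>z \<in> U\<close>] has_derivative_ident] by simp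
  then have "G z \<bullet> v + H z v \<bullet> z = 0"
    using tangent_derivative_zero[of z v "\<lambda>y. G y \<bullet> y"] assms by blast
  with assms(4) show ?thesis by simp
qed

text \<open>No third derivative is available to differentiate the hypothesis; instead one divides it
  by \<open>s\<^sub>k\<close> at level-set points \<open>z\<^sub>k = x + s\<^sub>k (w + o(1))\<close> and uses the continuity of \<open>H\<close>.\<close>
lemma tangent_hessian_limit:
  assumes radical: "\<And>z u. z \<in> U \<Longrightarrow> g z = 0 \<Longrightarrow> G z \<bullet> u = 0 \<Longrightarrow> H z u \<bullet> (z - x) = 0"
    and x: "x \<in> U" "g x = 0" and v: "G x \<bullet> v = 0" and w: "G x \<bullet> w = 0"
  shows "H x v \<bullet> w = 0"
proof -
  obtain s r where s: "\<And>k. s k > 0" and yU: "\<And>k. x + s k *\<^sub>R (w + r k *\<^sub>R G x) \<in> U"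
    and gy: "\<And>k. g (x + s k *\<^sub>R (w + r k *\<^sub>R G x)) = 0" and s0: "s \<longlonglongrightarrow> 0" and r0: "r \<longlonglongrightarrow> 0"
    using tangent_zero_sequence[OF open_domain x(1) continuous_on_g has_derivative_g x(2)
        gradient_nonzero w] x(1) by blast
  define y where "y k = x + s k *\<^sub>R (w + r k *\<^sub>R G x)" for k
  have "y \<longlonglongrightarrow> x + 0 *\<^sub>R (w + 0 *\<^sub>R G x)"
    unfolding y_def[abs_def] by (intro tendsto_intros s0 r0)
  then have y_lim: "y \<longlonglongrightarrow> x" by simp
  have G_lim: "(\<lambda>k. G (y k)) \<longlonglongrightarrow> G x"
    using isCont_tendsto_compose[OF has_derivative_continuous[OF has_derivative_G[OF x(1)]] y_lim] .
  define u where "u k = v - ((G (y k) \<bullet> v) / (G (y k) \<bullet> G (y k))) *\<^sub>R G (y k)" for k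
  have "u \<longlonglongrightarrow> v - ((G x \<bullet> v) / (G x \<bullet> G x)) *\<^sub>R G x"
    unfolding u_def[abs_def] using gradient_nonzero[OF x(1)]
    by (intro tendsto_intros G_lim) simp
  then have u_lim: "u \<longlonglongrightarrow> v" using v by simp
  have "H (y k) (u k) \<bullet> (w + r k *\<^sub>R G x) = 0" for k
  proof -
    have "G (y k) \<bullet> u k = 0"
      using gradient_nonzero[OF yU[of k]] by (simp add: u_def y_def inner_diff_right)
    then have "H (y k) (u k) \<bullet> (y k - x) = 0"
      using radical yU[of k] gy[of k] unfolding y_def by blast
    then show ?thesis using s[of k] by (simp add: y_def)
  qed
  moreover have "(\<lambda>k. H (y k) (u k)) \<longlonglongrightarrow> H x v"
    using tendsto_linear_family_apply[OF continuous_H linear_H y_lim x(1) _ u_lim] yU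
    by (simp add: y_def)
  moreover have "(\<lambda>k. w + r k *\<^sub>R G x) \<longlonglongrightarrow> w + 0 *\<^sub>R G x" by (intro tendsto_intros r0)
  ultimately have "(\<lambda>k. 0) \<longlonglongrightarrow> H x v \<bullet> (w + 0 *\<^sub>R G x)"
    using tendsto_inner by fastforce
  then show ?thesis by (simp add: LIMSEQ_const_iff)
qed

lemma transversal_hessian_right_radical:
  assumes dim: "3 \<le> DIM('a)" and x: "x \<in> U" "g x = 0" and e: "e \<noteq> 0"
    and normal_orth: "\<And>z. z \<in> U \<Longrightarrow> g z = 0 \<Longrightarrow> G z \<bullet> e = 0"
    and radial: "\<And>z. z \<in> U \<Longrightarrow> g z = 0 \<Longrightarrow> G z \<bullet> z = 0"
  obtains w where "w \<noteq> 0" "G x \<bullet> w = 0" "x \<bullet> w = 0"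
    "\<And>v. G x \<bullet> v = 0 \<Longrightarrow> x \<bullet> v = 0 \<Longrightarrow> H x v \<bullet> w = 0"
proof -
  define c where "c = (e \<bullet> x) / (x \<bullet> x)"
  show ?thesis
  proof (cases "e - c *\<^sub>R x = 0")
    case False
    have "G x \<bullet> (e - c *\<^sub>R x) = 0"
      using normal_orth[OF x] radial[OF x] by (simp add: inner_diff_right)
    moreover have "x \<bullet> (e - c *\<^sub>R x) = 0"
      by (cases "x = 0") (simp_all add: c_def inner_diff_right inner_commute)
    moreover have "H x v \<bullet> (e - c *\<^sub>R x) = 0" if "G x \<bullet> v = 0" for v
      using tangent_hessian_orthogonal[OF normal_orth x that]
        tangent_hessian_orthogonal_position[OF radial x that]
      by (simp add: inner_diff_right)
    ultimately show ?thesis using that False by blast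
  next
    case True
    then have e_eq: "e = c *\<^sub>R x" by simp
    with e have "c \<noteq> 0" by auto
    have "H z u \<bullet> (z - x) = 0" if "z \<in> U" "g z = 0" "G z \<bullet> u = 0" for z u
      using tangent_hessian_orthogonal[OF normal_orth that]
        tangent_hessian_orthogonal_position[OF radial that] e_eq \<open>c \<noteq> 0\<close>
      by (simp add: inner_diff_right)
    moreover obtain w where "w \<noteq> 0" "G x \<bullet> w = 0" "x \<bullet> w = 0"
      using exists_nonzero_orthogonal_pair[OF dim] by blast
    ultimately show ?thesis using that tangent_hessian_limit x by blast
  qed
qed

lemma transversal_hessian_left_radical:
  assumes "3 \<le> DIM('a)" "x \<in> U" "g x = 0" "e \<noteq> 0"
    and "\<And>z. z \<in> U \<Longrightarrow> g z = 0 \<Longrightarrow> G z \<bullet> e = 0"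
    and radial: "\<And>z. z \<in> U \<Longrightarrow> g z = 0 \<Longrightarrow> G z \<bullet> z = 0"
  shows "\<exists>u\<in>{v. G x \<bullet> v = 0 \<and> x \<bullet> v = 0}. u \<noteq> 0 \<and> (\<forall>v\<in>{v. G x \<bullet> v = 0 \<and> x \<bullet> v = 0}. H x u \<bullet> v = 0)"
proof -
  obtain w where "w \<noteq> 0" "G x \<bullet> w = 0" "x \<bullet> w = 0" "\<And>v. G x \<bullet> v = 0 \<Longrightarrow> x \<bullet> v = 0 \<Longrightarrow> H x v \<bullet> w = 0"
    using transversal_hessian_right_radical[OF assms] by blast
  then show ?thesis
    by (intro left_radical_nontrivial[OF linear_H[OF \<open>x \<in> U\<close>] radial[OF assms(2,3)] refl]) auto
qed

end

lemma exterior_unit_normal_orthogonal: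
  fixes A :: "(real^'n) set"
  assumes C2: "C2_defining_function U g G H" and z: "z \<in> U" "g z = 0"
    and level: "\<And>y. y \<in> U \<Longrightarrow> g y = 0 \<Longrightarrow> y \<in> frontier A"
    and normal: "exterior_unit_normal A z m" and m: "m \<bullet> e = 0"
  shows "G z \<bullet> e = 0"
proof -
  obtain U' g' G' H' where chart: "C2_chart A z U' g' G' H'" and m_def: "m = (1 / norm (G' z)) *\<^sub>R G' z"
    using normal unfolding exterior_unit_normal_def by blast
  then have U': "open U'" "z \<in> U'" and dg': "(g' has_derivative (\<lambda>h. G' z \<bullet> h)) (at z)"
    and G'_nz: "G' z \<noteq> 0" and level': "U' \<inter> frontier A = {y\<in>U'. g' y = 0}"
    unfolding C2_chart_def by blast+
  interpret C2: C2_defining_function "U \<inter> U'" g G H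
    by (rule C2_defining_function.restrict[OF C2])
      (use U' C2_defining_function.open_domain[OF C2] in auto)
  have "G' z \<bullet> v = 0" if "G z \<bullet> v = 0" for v
    using C2.tangent_derivative_zero[OF _ z(2) that dg'] z U' level level' by blast
  then have "G' z = ((G' z \<bullet> G z) / (G z \<bullet> G z)) *\<^sub>R G z"
    by (rule parallel_if_orthogonal_complement_subset)
  then obtain c where c: "G' z = c *\<^sub>R G z" by blast
  with G'_nz have "c \<noteq> 0" by auto
  moreover have "G' z \<bullet> e = 0" using m G'_nz by (simp add: m_def)
  ultimately show ?thesis by (simp add: c)
qed

lemma cone_second_fundamental_form_degenerate:
  fixes A :: "(real^'n) set"
  assumes dim: "3 \<le> CARD('n)" and cone: "\<forall>x\<in>A. \<forall>t>0. t *\<^sub>R x \<in> A"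
    and chart: "C2_chart A x U g G H" and x: "x \<in> frontier A" and V: "open V" "x \<in> V"
    and e: "e \<noteq> 0"
    and normals: "\<And>y. y \<in> frontier A \<Longrightarrow> y \<in> V \<Longrightarrow> \<exists>m. exterior_unit_normal A y m \<and> m \<bullet> e = 0"
  shows "restricted_eigenvalue (second_fundamental_form G H x) {v. G x \<bullet> v = 0 \<and> x \<bullet> v = 0} 0"
proof -
  have C2: "C2_defining_function U g G H" and "x \<in> U"
    and level_set: "U \<inter> frontier A = {y\<in>U. g y = 0}"
    using chart unfolding C2_chart_def C2_defining_function_def by auto
  interpret C2_defining_function "U \<inter> V" g G H
    by (rule C2_defining_function.restrict[OF C2])
      (use V C2_defining_function.open_domain[OF C2] in auto)
  have level: "g y = 0 \<longleftrightarrow> y \<in> frontier A" if "y \<in> U \<inter> V" for y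
    using that level_set by blast
  have normal_orth: "G z \<bullet> e = 0" if z: "z \<in> U \<inter> V" "g z = 0" for z
  proof -
    have "z \<in> frontier A" "z \<in> V" using level z by auto
    then obtain m where "exterior_unit_normal A z m" "m \<bullet> e = 0" using normals by blast
    then show ?thesis
      by (intro exterior_unit_normal_orthogonal[OF restrict[OF open_domain order_refl] z])
        (use level in auto)
  qed
  have radial: "G z \<bullet> z = 0" if z: "z \<in> U \<inter> V" "g z = 0" for z
  proof (rule gradient_orthogonal_to_ray[OF has_derivative_g[OF z(1)] open_domain z(1)])
    fix t :: real assume t: "t > 0" "t *\<^sub>R z \<in> U \<inter> V"
    have "z \<in> frontier A" using level z by blast
    then have "t *\<^sub>R z \<in> frontier A" by (rule scaleR_mem_frontier_cone[OF cone _ t(1)])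
    then show "g (t *\<^sub>R z) = 0" using level t(2) by blast
  qed
  have "3 \<le> DIM(real^'n)" using dim by simp
  moreover have "x \<in> U \<inter> V" "g x = 0" using \<open>x \<in> U\<close> V level x by auto
  ultimately obtain u where "u \<in> {v. G x \<bullet> v = 0 \<and> x \<bullet> v = 0}" "u \<noteq> 0"
    and "\<forall>v\<in>{v. G x \<bullet> v = 0 \<and> x \<bullet> v = 0}. H x u \<bullet> v = 0"
    using transversal_hessian_left_radical[OF _ _ _ e normal_orth radial] by blast
  then show ?thesis
    unfolding restricted_eigenvalue_def second_fundamental_form_def by (intro bexI[of _ u]) auto
qed

theorem proposition2p15:
  fixes \<Sigma> \<Omega> Sing :: "(real^'n) set"
    and \<nu> :: "real^'n \<Rightarrow> real^'n"
    and l :: real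
  assumes N3: "CARD('n) \<ge> 3"
    and cone: "convex_cone_vertex0 \<Sigma>"
    and Omega: "bounded_domain \<Omega>"
    and Omega_C2: "\<forall>x\<in>frontier \<Omega>. boundary_C2_at \<Omega> x"
    and SigOm: "bounded_domain (\<Sigma> \<inter> \<Omega>)"
    and sing: "Sing \<subseteq> frontier \<Sigma>"
    and ell: "0 \<le> l" "l \<le> real CARD('n) - 2"
    and sing_size: "Limsup (at_right 0)
          (\<lambda>r::real. ennreal (r powr (l - real CARD('n))) *
              emeasure lborel {x. \<exists>s\<in>closure Sing. dist x s \<le> r}) < \<infinity>"
    and Gamma1_sub: "frontier (\<Sigma> \<inter> \<Omega>) - (closure (\<Sigma> \<inter> frontier \<Omega>) \<union> closure Sing)
                       \<subseteq> frontier \<Sigma>"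
    and Gamma1_open: "openin (top_of_set (frontier \<Sigma>))
          (frontier (\<Sigma> \<inter> \<Omega>) - (closure (\<Sigma> \<inter> frontier \<Omega>) \<union> closure Sing))"
    and Gamma1_C2: "\<forall>x \<in> frontier (\<Sigma> \<inter> \<Omega>) - (closure (\<Sigma> \<inter> frontier \<Omega>) \<union> closure Sing).
          boundary_C2_at \<Sigma> x"
    and normal: "\<forall>x \<in> frontier (\<Sigma> \<inter> \<Omega>) - (closure (\<Sigma> \<inter> frontier \<Omega>) \<union> closure Sing).
          exterior_unit_normal \<Sigma> x (\<nu> x)"
    and nondeg: "\<exists>x \<in> frontier (\<Sigma> \<inter> \<Omega>) - (closure (\<Sigma> \<inter> frontier \<Omega>) \<union> closure Sing).
          transversally_nondegenerate \<Sigma> x"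
  shows "span (\<nu> ` (frontier (\<Sigma> \<inter> \<Omega>) - (closure (\<Sigma> \<inter> frontier \<Omega>) \<union> closure Sing)))
           = UNIV"
proof -
  define \<Gamma> where "\<Gamma> = frontier (\<Sigma> \<inter> \<Omega>) - (closure (\<Sigma> \<inter> frontier \<Omega>) \<union> closure Sing)"
  show ?thesis unfolding \<Gamma>_def[symmetric]
  proof (rule ccontr)
    assume "span (\<nu> ` \<Gamma>) \<noteq> UNIV"
    then obtain e where e: "e \<noteq> 0" and e_orth: "\<forall>y\<in>span (\<nu> ` \<Gamma>). e \<bullet> y = 0"
      using span_not_UNIV_orthogonal by blast
    obtain V where V: "open V" and \<Gamma>_eq: "\<Gamma> = frontier \<Sigma> \<inter> V"
      using Gamma1_open unfolding openin_open \<Gamma>_def by blast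
    obtain x U g G H where x: "x \<in> \<Gamma>" and chart: "C2_chart \<Sigma> x U g G H"
      and nondegenerate: "\<forall>lam. restricted_eigenvalue (second_fundamental_form G H x)
                  {v. G x \<bullet> v = 0 \<and> x \<bullet> v = 0} lam \<longrightarrow> lam \<noteq> 0"
      using nondeg unfolding \<Gamma>_def transversally_nondegenerate_def by blast
    have normals: "\<exists>m. exterior_unit_normal \<Sigma> y m \<and> m \<bullet> e = 0" if y: "y \<in> \<Gamma>" for y
    proof (intro exI conjI)
      show "exterior_unit_normal \<Sigma> y (\<nu> y)" using normal y unfolding \<Gamma>_def by blast
      have "\<nu> y \<in> span (\<nu> ` \<Gamma>)" using y by (intro span_base imageI)
      then have "e \<bullet> \<nu> y = 0" using e_orth by blast
      then show "\<nu> y \<bullet> e = 0" by (simp add: inner_commute)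
    qed
    have "\<forall>x\<in>\<Sigma>. \<forall>t>0. t *\<^sub>R x \<in> \<Sigma>" using cone unfolding convex_cone_vertex0_def by blast
    moreover have "x \<in> frontier \<Sigma>" "x \<in> V" using x \<Gamma>_eq by auto
    ultimately have "restricted_eigenvalue (second_fundamental_form G H x) {v. G x \<bullet> v = 0 \<and> x \<bullet> v = 0} 0"
      by (rule cone_second_fundamental_form_degenerate[OF N3 _ chart _ V _ e])
        (use normals \<Gamma>_eq in blast)
    with nondegenerate show False by blast
  qed
qed

end
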